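(* Let $R>1$ and fix $(t_0,x_0)$ with $t_0\ge0$, $t_0+|x_0|\le R$. For $0\le\tilde r\le t_0$ let $t=t_0-\tilde r$, and for $\tilde\omega\in\mathbb{S}^2$ let $x=x_0+\tilde r\tilde\omega$, $r=|x|$, $\omega=x/r$, $\tau=\omega\cdot\tilde\omega$, $u_*=R-t+r$, $v_*=R-t-r$. Then for $0<\gamma<1$ and $0\le\alpha<1$, \[ \int_{\mathbb{S}^2}\big((1-\tau)u_*^{\gamma}+v_*^{\gamma}\big)^{-\alpha}\,d\tilde\omega\le C(R-t_0)^{-\alpha\gamma} \] for some constant $C$ depending only on $\gamma$, $\alpha$ and $R$. *)

theory Defs
  imports "HOL-Analysis.Analysis"
begin

definition sph :: "real \<Rightarrow> real \<Rightarrow> real^3" where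
  "sph \<theta> \<phi> = vector [sin \<theta> * cos \<phi>, sin \<theta> * sin \<phi>, cos \<theta>]"

text \<open>Standard surface (area) measure on S^2: push-forward of
  sin(theta) d(theta) d(phi) on [0,pi] x [0,2pi] under the spherical parametrisation.\<close>
definition S2_measure :: "(real^3) measure" where
  "S2_measure = distr
     (density (lborel \<Otimes>\<^sub>M lborel)
        (\<lambda>p. indicator ({0..pi} \<times> {0..2*pi}) p * ennreal (sin (fst p))))
     borel (\<lambda>p. sph (fst p) (snd p))"

end

theory Submission
  imports Defs
begin

text \<open>Write x0 = \<rho> e with a unit vector e and put a = R - t0, s = rt and c = e \<bullet> w, so that
  r^2 = \<rho>^2 + 2\<rho>sc + s^2 and \<tau> = (\<rho>c + s)/r. If \<rho> \<le> s, then v* \<ge> a(1 - c)/2; if s < \<rho>, then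
  1 - \<tau> \<ge> (1 - c^2)/8 while u* \<ge> a. Either way the integrand is at most a^(-\<alpha>\<gamma>) times a
  combination of (1 - e \<bullet> w)^(-p) and (1 + e \<bullet> w)^(-p) with p \<in> {\<alpha>\<gamma>, \<alpha>}. Since p < 1 these are
  integrable over the sphere uniformly in e: in spherical coordinates with e = sph \<theta>' \<phi>', the area
  element absorbs the singularity into the product |\<theta> - \<theta>'|^(-p) |\<phi> - \<phi>'|^(-p) of two integrable
  one-dimensional singularities.\<close>

section \<open>Integrable power singularities on the line\<close>

text \<open>The value \<infinity> at the pole makes the pointwise bounds below hold everywhere, not just almost
  everywhere.\<close>
definition inv_abs_powr :: "real \<Rightarrow> real \<Rightarrow> ennreal" where
  "inv_abs_powr p y = (if y = 0 then \<infinity> else ennreal (\<bar>y\<bar> powr - p))"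

lemma inv_abs_powr_measurable [measurable]: "inv_abs_powr p \<in> borel_measurable borel"
  unfolding inv_abs_powr_def by measurable

lemma inv_abs_powr_pos: "0 < inv_abs_powr p y"
  unfolding inv_abs_powr_def by auto

lemma inv_abs_powr_abs: "inv_abs_powr p \<bar>y\<bar> = inv_abs_powr p y"
  unfolding inv_abs_powr_def by auto

lemma nn_integral_powr_Icc_0:
  assumes "0 \<le> p" "p < 1" "0 \<le> M"
  shows "(\<integral>\<^sup>+ y. ennreal (indicator {0..M} y * y powr - p) \<partial>lborel) = ennreal (M powr (1 - p) / (1 - p))"
proof -
  have "((\<lambda>y. y powr - p) has_integral (M powr (- p + 1) / (- p + 1))) {0..M}"
    by (rule has_integral_powr_from_0) (use assms in auto)
  from nn_integral_has_integral_lebesgue[OF _ this] show ?thesis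
    by (simp add: add.commute)
qed

lemma nn_integral_inv_abs_powr_le:
  assumes "0 \<le> p" "p < 1" "0 \<le> M" "c - M \<le> a" "b \<le> c + M"
  shows "(\<integral>\<^sup>+ y. indicator {a..b} y * inv_abs_powr p (y - c) \<partial>lborel)
    \<le> ennreal (2 * M powr (1 - p) / (1 - p))"
proof -
  define h where "h = (\<lambda>y. ennreal (indicator {0..M} y * y powr - p))"
  have [measurable]: "h \<in> borel_measurable borel"
    unfolding h_def by measurable
  have h_reflect: "(\<integral>\<^sup>+ y. h (- y) \<partial>lborel) = (\<integral>\<^sup>+ y. h y \<partial>lborel)"
    using nn_integral_real_affine[of h "-1" 0] by simp
  have "(\<integral>\<^sup>+ y. indicator {a..b} y * inv_abs_powr p (y - c) \<partial>lborel)
      \<le> (\<integral>\<^sup>+ y. indicator {c - M..c + M} y * inv_abs_powr p (y - c) \<partial>lborel)"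
    by (intro nn_integral_mono) (use assms in \<open>auto simp: indicator_def\<close>)
  also have "\<dots> = (\<integral>\<^sup>+ y. indicator {- M..M} y * inv_abs_powr p y \<partial>lborel)"
    using nn_integral_real_affine[of "\<lambda>y. indicator {c - M..c + M} y * inv_abs_powr p (y - c)" 1 c]
    by (simp add: indicator_def)
  also have "\<dots> \<le> (\<integral>\<^sup>+ y. h y + h (- y) \<partial>lborel)"
    using AE_lborel_singleton[of 0]
    by (intro nn_integral_mono_AE, eventually_elim)
      (auto simp: h_def inv_abs_powr_def indicator_def abs_if)
  also have "\<dots> = (\<integral>\<^sup>+ y. h y \<partial>lborel) + (\<integral>\<^sup>+ y. h (- y) \<partial>lborel)"
    by (rule nn_integral_add) (auto simp: h_def)
  also have "\<dots> = 2 * ennreal (M powr (1 - p) / (1 - p))"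
    unfolding h_reflect using nn_integral_powr_Icc_0[OF assms(1-3)] by (simp add: h_def mult_2)
  also have "\<dots> = ennreal (2 * M powr (1 - p) / (1 - p))"
    using assms by (simp add: ennreal_mult' flip: times_divide_eq_right)
  finally show ?thesis .
qed

section \<open>Spherical coordinates\<close>

lemma inner_sph: "sph a b \<bullet> sph t f = sin a * sin t * cos (f - b) + cos a * cos t"
  unfolding sph_def inner_vec_def by (simp add: sum_3 vector_3 cos_diff algebra_simps)

lemma norm_sph [simp]: "norm (sph t f) = 1"
  by (simp add: norm_eq_1 inner_sph flip: power2_eq_square)

lemma one_minus_inner_sph:
  "1 - sph a b \<bullet> sph t f = (1 - cos (t - a)) + sin t * sin a * (1 - cos (f - b))"
  unfolding inner_sph by (simp add: cos_diff algebra_simps)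

lemma measurable_sph [measurable]:
  "(\<lambda>q. sph (fst q) (snd q)) \<in> borel_measurable (lborel \<Otimes>\<^sub>M lborel)"
proof -
  have "sph t f = (sin t * cos f) *\<^sub>R axis 1 1 + (sin t * sin f) *\<^sub>R axis 2 1 + cos t *\<^sub>R axis 3 1"
    for t f
    unfolding sph_def by (simp add: vec_eq_iff forall_3 axis_def vector_3)
  then show ?thesis
    by simp
qed

lemma sets_S2_measure [measurable_cong]: "sets S2_measure = sets borel"
  by (simp add: S2_measure_def)

lemma AE_S2_measure_norm: "AE w in S2_measure. norm w = 1"
  unfolding S2_measure_def by (subst AE_distr_iff) auto

lemma nn_integral_S2_measure:
  assumes [measurable]: "g \<in> borel_measurable borel"
  shows "(\<integral>\<^sup>+ w. g w \<partial>S2_measure) = (\<integral>\<^sup>+ q. indicator ({0..pi} \<times> {0..2 * pi}) q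
    * ennreal (sin (fst q)) * g (sph (fst q) (snd q)) \<partial>(lborel \<Otimes>\<^sub>M lborel))"
  unfolding S2_measure_def by (simp add: nn_integral_distr nn_integral_density)

lemma unit_vector_eq_sph:
  fixes e :: "real^3"
  assumes "norm e = 1"
  obtains a b where "0 \<le> a" "a \<le> pi" "0 \<le> b" "b < 2 * pi" "e = sph a b"
proof -
  have sum_sq: "(e$1)\<^sup>2 + (e$2)\<^sup>2 + (e$3)\<^sup>2 = 1"
    using assms by (simp add: norm_eq_1 inner_vec_def sum_3 power2_eq_square)
  then have "(e$3)\<^sup>2 \<le> 1"
    using zero_le_power2[of "e$1"] zero_le_power2[of "e$2"] by linarith
  then have "\<bar>e$3\<bar> \<le> 1"
    using abs_le_square_iff[of "e$3" 1] by simp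
  define a where "a = arccos (e$3)"
  have a: "0 \<le> a" "a \<le> pi" "cos a = e$3"
    using \<open>\<bar>e$3\<bar> \<le> 1\<close> by (auto simp: a_def arccos_lbound arccos_ubound)
  have sin_a: "sin a = sqrt ((e$1)\<^sup>2 + (e$2)\<^sup>2)"
    using sin_arccos_abs[OF \<open>\<bar>e$3\<bar> \<le> 1\<close>] sum_sq by (simp add: a_def algebra_simps)
  show ?thesis
  proof (cases "sin a = 0")
    case True
    then have "e$1 = 0" "e$2 = 0"
      using sin_a by (simp_all add: sum_power2_eq_zero_iff)
    then have "e = sph a 0"
      using a True by (simp add: sph_def vec_eq_iff forall_3 vector_3)
    then show ?thesis
      using that[of a 0] a by simp
  next
    case False
    moreover have "0 \<le> sin a"
      using sin_a by simp
    ultimately have "0 < sin a"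
      by simp
    have "(e$1 / sin a)\<^sup>2 + (e$2 / sin a)\<^sup>2 = ((e$1)\<^sup>2 + (e$2)\<^sup>2) / (sin a)\<^sup>2"
      by (simp add: power_divide add_divide_distrib)
    also have "\<dots> = 1"
      using \<open>0 < sin a\<close> by (auto simp: sin_a)
    finally have "(e$1 / sin a)\<^sup>2 + (e$2 / sin a)\<^sup>2 = 1" .
    then obtain b where b: "0 \<le> b" "b < 2 * pi" "e$1 / sin a = cos b" "e$2 / sin a = sin b"
      by (rule sincos_total_2pi)
    then have "e = sph a b"
      using a \<open>0 < sin a\<close> by (simp add: sph_def vec_eq_iff forall_3 vector_3 field_simps)
    then show ?thesis
      using that a b by simp
  qed
qed

section \<open>The pole singularity on the sphere\<close>

lemma one_minus_cos_ge:
  fixes y :: real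
  assumes "\<bar>y\<bar> \<le> pi"
  shows "y\<^sup>2 / 8 \<le> 1 - cos y"
proof -
  define z where "z = \<bar>y\<bar> / 2"
  have z: "0 \<le> z" "z\<^sup>2 \<le> 3"
  proof -
    have "z \<le> 8 / 5"
      using assms pi_approx by (simp add: z_def)
    moreover have "0 \<le> z"
      by (simp add: z_def)
    ultimately have "z\<^sup>2 \<le> (8 / 5)\<^sup>2"
      by (intro power_mono)
    then show "0 \<le> z" "z\<^sup>2 \<le> 3"
      using \<open>0 \<le> z\<close> by (simp_all add: power2_eq_square)
  qed
  have "\<bar>sin z - (\<Sum>m<3. sin_coeff m * z ^ m)\<bar> \<le> inverse (fact 3) * \<bar>z\<bar> ^ 3"
    by (rule Maclaurin_sin_bound)
  then have "\<bar>sin z - z\<bar> \<le> z ^ 3 / 6"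
    using z by (simp add: sin_coeff_def eval_nat_numeral fact_numeral)
  then have "z - z ^ 3 / 6 \<le> sin z"
    unfolding abs_le_iff by linarith
  moreover have "z ^ 3 / 6 \<le> z / 2"
    using z mult_left_mono[OF z(2) z(1)] by (simp add: power3_eq_cube power2_eq_square)
  ultimately have "(z / 2)\<^sup>2 \<le> (sin z)\<^sup>2"
    using z by (intro power_mono) auto
  moreover have "cos y = 1 - 2 * (sin z)\<^sup>2"
    using cos_double_sin[of "y / 2"] by (cases "0 \<le> y") (simp_all add: z_def)
  ultimately show ?thesis
    by (simp add: z_def power_divide)
qed

lemma abs_sin_diff_le: "\<bar>sin x - sin y\<bar> \<le> \<bar>x - y :: real\<bar>"
proof -
  have "\<bar>sin x - sin y\<bar> = 2 * \<bar>sin ((x - y) / 2)\<bar> * \<bar>cos ((x + y) / 2)\<bar>"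
    by (simp add: sin_diff_sin abs_mult)
  also have "\<dots> \<le> 2 * \<bar>(x - y) / 2\<bar> * 1"
    by (intro mult_mono abs_sin_x_le_abs_x) auto
  finally show ?thesis
    by simp
qed

lemma one_minus_cos_ge_mod_2pi:
  fixes \<psi> :: real
  assumes "\<bar>\<psi>\<bar> \<le> 2 * pi"
  obtains P where "0 \<le> P" "P \<le> pi" "P\<^sup>2 / 8 \<le> 1 - cos \<psi>"
    "P = \<bar>\<psi>\<bar> \<or> P = \<bar>\<psi> - 2 * pi\<bar> \<or> P = \<bar>\<psi> + 2 * pi\<bar>"
proof -
  consider "\<bar>\<psi>\<bar> \<le> pi" | "pi < \<psi>" | "\<psi> < - pi"
    by linarith
  then show ?thesis
  proof cases
    case 1
    then show ?thesis
      using that[of "\<bar>\<psi>\<bar>"] one_minus_cos_ge[of \<psi>] by simp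
  next
    case 2
    then have "(2 * pi - \<psi>)\<^sup>2 / 8 \<le> 1 - cos \<psi>"
      using one_minus_cos_ge[of "2 * pi - \<psi>"] assms by (simp add: cos_diff)
    then show ?thesis
      using that[of "2 * pi - \<psi>"] 2 assms by simp
  next
    case 3
    then have "\<bar>\<psi> + 2 * pi\<bar>\<^sup>2 / 8 \<le> 1 - cos \<psi>"
      using one_minus_cos_ge[of "\<psi> + 2 * pi"] assms by simp
    then show ?thesis
      using that[of "\<bar>\<psi> + 2 * pi\<bar>"] 3 assms by simp
  qed
qed

definition pole_sing :: "real \<Rightarrow> 'a::euclidean_space \<Rightarrow> 'a \<Rightarrow> ennreal" where
  "pole_sing p e w = (if e \<bullet> w < 1 then ennreal ((1 - e \<bullet> w) powr - p) else \<infinity>)"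

lemma pole_sing_measurable [measurable]: "pole_sing p e \<in> borel_measurable borel"
proof -
  have [measurable]: "(\<lambda>w. e \<bullet> w) \<in> borel_measurable borel"
    by (intro borel_measurable_continuous_onI continuous_intros)
  show ?thesis
    unfolding pole_sing_def by measurable
qed

lemma mult_le_add_of_quadratic_bounds:
  fixes d s S P X Y :: real
  assumes "0 \<le> d" "0 \<le> P" "P \<le> 4" "0 \<le> s" "0 \<le> S" "s \<le> S + d"
    and X: "d\<^sup>2 / 8 \<le> X" and Y: "s * S * P\<^sup>2 / 8 \<le> Y" "0 \<le> Y"
  shows "d * s * P / 64 \<le> X + Y"
proof (cases "s \<le> 2 * d")
  case True
  have "d * s * P \<le> d * (2 * d) * 4"
    using True assms by (intro mult_mono) auto
  then show ?thesis
    using X Y by (simp add: power2_eq_square)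
next
  case False
  then have "s * (s / 2) * P\<^sup>2 \<le> s * S * P\<^sup>2"
    using assms by (intro mult_right_mono mult_left_mono) auto
  then have Y': "s\<^sup>2 * P\<^sup>2 / 16 \<le> Y"
    using Y by (simp add: power2_eq_square)
  have "0 \<le> X"
    using X zero_le_power2[of d] by linarith
  have "(d * s * P / 64)\<^sup>2 \<le> 4 * (d\<^sup>2 / 8) * (s\<^sup>2 * P\<^sup>2 / 16)"
    by (simp add: power_mult_distrib power_divide)
  also have "\<dots> \<le> 4 * X * Y"
    using X Y' \<open>0 \<le> X\<close> by (intro mult_mono mult_left_mono) simp_all
  also have "\<dots> = (X + Y)\<^sup>2 - (X - Y)\<^sup>2"
    by (simp add: power2_eq_square algebra_simps)
  also have "\<dots> \<le> (X + Y)\<^sup>2"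
    by simp
  finally have "(d * s * P / 64)\<^sup>2 \<le> (X + Y)\<^sup>2" .
  moreover have "0 \<le> X + Y"
    using \<open>0 \<le> X\<close> Y by simp
  ultimately show ?thesis
    by (rule power2_le_imp_le)
qed

lemma sin_mult_powr_le:
  fixes p d s S P X Y :: real
  assumes p: "0 \<le> p" "p < 1" and "0 < d" "0 < P" "P \<le> 4" "0 \<le> s" "s \<le> 1" "0 \<le> S" "s \<le> S + d"
    and "d\<^sup>2 / 8 \<le> X" "s * S * P\<^sup>2 / 8 \<le> Y" "0 \<le> Y"
  shows "s * (X + Y) powr - p \<le> 64 * (d powr - p * P powr - p)"
proof (cases "s = 0")
  case True
  then show ?thesis
    by simp
next
  case False
  then have "0 < s"
    using assms by simp
  then have pos: "0 < d * s * P / 64"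
    using assms by simp
  have "s * (X + Y) powr - p \<le> s * (d * s * P / 64) powr - p"
    using assms pos mult_le_add_of_quadratic_bounds[of d P s S X Y]
    by (intro mult_left_mono powr_mono2') auto
  also have "\<dots> = s * (d powr - p * s powr - p * P powr - p * 64 powr p)"
    using assms \<open>0 < s\<close> by (simp add: powr_divide powr_mult powr_minus divide_simps)
  also have "\<dots> = 64 powr p * s powr (1 - p) * (d powr - p * P powr - p)"
    using \<open>0 < s\<close> by (simp add: powr_diff powr_minus divide_simps)
  also have "\<dots> \<le> 64 * 1 * (d powr - p * P powr - p)"
    using assms powr_mono[of p 1 64] by (intro mult_mono powr_le1) auto
  finally show ?thesis
    by simp
qed

lemma sin_mult_pole_sing_sph_le_angle:
  assumes p: "0 \<le> p" "p < 1" and "0 \<le> a" "a \<le> pi" "0 \<le> t" "t \<le> pi"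
    and P: "0 \<le> P" "P \<le> pi" "P\<^sup>2 / 8 \<le> 1 - cos (f - b)"
  shows "ennreal (sin t) * pole_sing p (sph a b) (sph t f) \<le> 64 * inv_abs_powr p (t - a) * inv_abs_powr p P"
proof (cases "t = a \<or> P = 0")
  case True
  then have "64 * inv_abs_powr p (t - a) * inv_abs_powr p P = \<infinity>"
    using inv_abs_powr_pos[of p] by (auto simp: inv_abs_powr_def ennreal_mult_eq_top_iff)
  then show ?thesis
    by simp
next
  case False
  define d where "d = \<bar>t - a\<bar>"
  define Y where "Y = sin t * sin a * (1 - cos (f - b))"
  have "0 < d" "0 < P"
    using False P by (auto simp: d_def)
  have X: "d\<^sup>2 / 8 \<le> 1 - cos (t - a)"
    using one_minus_cos_ge[of "t - a"] assms by (simp add: d_def)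
  have sin: "0 \<le> sin a" "0 \<le> sin t" "sin t \<le> 1"
    using assms by (simp_all add: sin_ge_zero)
  have Y: "sin t * sin a * P\<^sup>2 / 8 \<le> Y" "0 \<le> Y"
    using mult_left_mono[OF P(3), of "sin t * sin a"] sin by (simp_all add: Y_def)
  have "sin t \<le> sin a + d"
    using abs_sin_diff_le[of t a] by (simp add: d_def)
  then have bound: "sin t * (1 - cos (t - a) + Y) powr - p \<le> 64 * (d powr - p * P powr - p)"
    using sin_mult_powr_le[OF p \<open>0 < d\<close> \<open>0 < P\<close> _ sin(2,3,1) _ X Y] P pi_less_4 by simp
  have inner: "1 - sph a b \<bullet> sph t f = 1 - cos (t - a) + Y"
    by (simp add: one_minus_inner_sph Y_def)
  have "0 < d\<^sup>2 / 8"
    using \<open>0 < d\<close> by simp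
  then have "sph a b \<bullet> sph t f < 1"
    using inner X Y by linarith
  then have "ennreal (sin t) * pole_sing p (sph a b) (sph t f)
      = ennreal (sin t * (1 - cos (t - a) + Y) powr - p)"
    using sin by (simp add: pole_sing_def inner ennreal_mult)
  also have "\<dots> \<le> ennreal (64 * (d powr - p * P powr - p))"
    using bound by (rule ennreal_leI)
  also have "\<dots> = 64 * inv_abs_powr p (t - a) * inv_abs_powr p P"
    using \<open>0 < d\<close> \<open>0 < P\<close> by (auto simp: inv_abs_powr_def d_def ennreal_mult mult.assoc)
  finally show ?thesis .
qed

lemma sin_mult_pole_sing_sph_le:
  assumes "0 \<le> p" "p < 1" "0 \<le> a" "a \<le> pi" "0 \<le> t" "t \<le> pi" "\<bar>f - b\<bar> \<le> 2 * pi"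
  shows "ennreal (sin t) * pole_sing p (sph a b) (sph t f) \<le> 64 * inv_abs_powr p (t - a) *
    (inv_abs_powr p (f - b) + inv_abs_powr p (f - (b + 2 * pi)) + inv_abs_powr p (f - (b - 2 * pi)))"
proof -
  obtain P where P: "0 \<le> P" "P \<le> pi" "P\<^sup>2 / 8 \<le> 1 - cos (f - b)"
    and "P = \<bar>f - b\<bar> \<or> P = \<bar>f - b - 2 * pi\<bar> \<or> P = \<bar>f - b + 2 * pi\<bar>"
    using one_minus_cos_ge_mod_2pi[OF assms(7)] by blast
  then have "inv_abs_powr p P
      \<le> inv_abs_powr p (f - b) + inv_abs_powr p (f - (b + 2 * pi)) + inv_abs_powr p (f - (b - 2 * pi))"
    by (auto simp: inv_abs_powr_abs algebra_simps intro: add_increasing add_increasing2)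
  then show ?thesis
    using sin_mult_pole_sing_sph_le_angle[OF assms(1-6) P] by (auto elim!: order_trans intro: mult_left_mono)
qed

lemma (in sigma_finite_measure) nn_integral_pair_mult:
  assumes [measurable]: "f \<in> borel_measurable N" "g \<in> borel_measurable M"
  shows "(\<integral>\<^sup>+ q. f (fst q) * g (snd q) \<partial>(N \<Otimes>\<^sub>M M)) = (\<integral>\<^sup>+ x. f x \<partial>N) * (\<integral>\<^sup>+ y. g y \<partial>M)"
proof -
  have "(\<integral>\<^sup>+ q. f (fst q) * g (snd q) \<partial>(N \<Otimes>\<^sub>M M)) = (\<integral>\<^sup>+ x. \<integral>\<^sup>+ y. f x * g y \<partial>M \<partial>N)"
    using nn_integral_fst[of "\<lambda>q. f (fst q) * g (snd q)" N] by simp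
  also have "\<dots> = (\<integral>\<^sup>+ x. f x * (\<integral>\<^sup>+ y. g y \<partial>M) \<partial>N)"
    by (simp add: nn_integral_cmult)
  finally show ?thesis
    by (simp add: nn_integral_multc)
qed

definition pole_bound :: "real \<Rightarrow> real" where
  "pole_bound p = 64 * (2 * pi powr (1 - p) / (1 - p)) * (6 * (4 * pi) powr (1 - p) / (1 - p))"

lemma nn_integral_pole_sing_le:
  fixes e :: "real^3"
  assumes p: "0 \<le> p" "p < 1" and "norm e = 1"
  shows "(\<integral>\<^sup>+ w. pole_sing p e w \<partial>S2_measure) \<le> ennreal (pole_bound p)"
proof -
  obtain a b where a: "0 \<le> a" "a \<le> pi" and b: "0 \<le> b" "b < 2 * pi" and e: "e = sph a b"
    using unit_vector_eq_sph[OF assms(3)] .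
  define D where "D = (\<lambda>t. indicator {0..pi} t * inv_abs_powr p (t - a))"
  define E where "E = (\<lambda>f. indicator {0..2 * pi} f * (inv_abs_powr p (f - b)
    + inv_abs_powr p (f - (b + 2 * pi)) + inv_abs_powr p (f - (b - 2 * pi))))"
  have [measurable]: "D \<in> borel_measurable borel" "E \<in> borel_measurable borel"
    unfolding D_def E_def by measurable
  have int_D: "(\<integral>\<^sup>+ t. D t \<partial>lborel) \<le> ennreal (2 * pi powr (1 - p) / (1 - p))"
    unfolding D_def using a by (intro nn_integral_inv_abs_powr_le p) auto
  define K where "K = 2 * (4 * pi) powr (1 - p) / (1 - p)"
  have "(\<integral>\<^sup>+ f. E f \<partial>lborel) = (\<integral>\<^sup>+ f. indicator {0..2 * pi} f * inv_abs_powr p (f - b) \<partial>lborel)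
      + (\<integral>\<^sup>+ f. indicator {0..2 * pi} f * inv_abs_powr p (f - (b + 2 * pi)) \<partial>lborel)
      + (\<integral>\<^sup>+ f. indicator {0..2 * pi} f * inv_abs_powr p (f - (b - 2 * pi)) \<partial>lborel)"
    unfolding E_def distrib_left by (simp add: nn_integral_add)
  also have "\<dots> \<le> ennreal K + ennreal K + ennreal K"
    unfolding K_def using b by (intro add_mono nn_integral_inv_abs_powr_le p) auto
  also have "\<dots> = ennreal (6 * (4 * pi) powr (1 - p) / (1 - p))"
    using p by (simp add: K_def flip: ennreal_plus)
  finally have int_E: "(\<integral>\<^sup>+ f. E f \<partial>lborel) \<le> ennreal (6 * (4 * pi) powr (1 - p) / (1 - p))" .
  have "(\<integral>\<^sup>+ w. pole_sing p e w \<partial>S2_measure) = (\<integral>\<^sup>+ q. indicator ({0..pi} \<times> {0..2 * pi}) q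
      * ennreal (sin (fst q)) * pole_sing p e (sph (fst q) (snd q)) \<partial>(lborel \<Otimes>\<^sub>M lborel))"
    by (rule nn_integral_S2_measure) simp
  also have "\<dots> \<le> (\<integral>\<^sup>+ q. 64 * (D (fst q) * E (snd q)) \<partial>(lborel \<Otimes>\<^sub>M lborel))"
  proof (rule nn_integral_mono)
    fix q :: "real \<times> real"
    show "indicator ({0..pi} \<times> {0..2 * pi}) q * ennreal (sin (fst q)) * pole_sing p e (sph (fst q) (snd q))
        \<le> 64 * (D (fst q) * E (snd q))"
      using sin_mult_pole_sing_sph_le[OF p a, of "fst q" "snd q" b] b
      by (cases "q \<in> {0..pi} \<times> {0..2 * pi}") (auto simp: D_def E_def e mult.assoc)
  qed
  also have "\<dots> = 64 * (\<integral>\<^sup>+ t. D t \<partial>lborel) * (\<integral>\<^sup>+ f. E f \<partial>lborel)"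
    by (simp add: nn_integral_cmult lborel.nn_integral_pair_mult mult.assoc)
  also have "\<dots> \<le> 64 * ennreal (2 * pi powr (1 - p) / (1 - p)) * ennreal (6 * (4 * pi) powr (1 - p) / (1 - p))"
    using int_D int_E by (intro mult_mono) auto
  also have "\<dots> = ennreal (pole_bound p)"
    unfolding pole_bound_def using p by (subst ennreal_mult', simp)+ simp
  finally show ?thesis .
qed

section \<open>The law of cosines and the null coordinates\<close>

lemma law_of_cosines_bounds:
  fixes \<rho> s c m :: real
  assumes "0 \<le> \<rho>" "0 \<le> s" "\<bar>c\<bar> \<le> 1" "0 \<le> m" and m: "m\<^sup>2 = \<rho>\<^sup>2 + 2 * \<rho> * s * c + s\<^sup>2"
  shows "\<rho> * c + s \<le> m" "m \<le> \<rho> + s" "\<bar>\<rho> - s\<bar> \<le> m"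
proof -
  have "c\<^sup>2 \<le> 1"
    using assms(3) abs_le_square_iff[of c 1] by simp
  then have "0 \<le> \<rho>\<^sup>2 * (1 - c\<^sup>2)"
    by simp
  moreover have "m\<^sup>2 - (\<rho> * c + s)\<^sup>2 = \<rho>\<^sup>2 * (1 - c\<^sup>2)"
    unfolding m by (simp add: power2_eq_square algebra_simps)
  ultimately have "\<bar>\<rho> * c + s\<bar> \<le> \<bar>m\<bar>"
    unfolding abs_le_square_iff by simp
  then show "\<rho> * c + s \<le> m"
    using abs_ge_self[of "\<rho> * c + s"] abs_of_nonneg[OF assms(4)] by linarith
  have "0 \<le> 2 * \<rho> * s * (1 - c)" "0 \<le> 2 * \<rho> * s * (1 + c)"
    using assms by simp_all
  moreover have "(\<rho> + s)\<^sup>2 - m\<^sup>2 = 2 * \<rho> * s * (1 - c)" "m\<^sup>2 - (\<rho> - s)\<^sup>2 = 2 * \<rho> * s * (1 + c)"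
    unfolding m by (simp_all add: power2_eq_square algebra_simps)
  ultimately have "\<bar>m\<bar> \<le> \<bar>\<rho> + s\<bar>" "\<bar>\<rho> - s\<bar> \<le> \<bar>m\<bar>"
    unfolding abs_le_square_iff by simp_all
  then show "m \<le> \<rho> + s" "\<bar>\<rho> - s\<bar> \<le> m"
    using assms by simp_all
qed

lemma law_of_cosines_near_ge:
  fixes a \<rho> s c m :: real
  assumes "0 \<le> \<rho>" "\<rho> \<le> a" "\<rho> \<le> s" "\<bar>c\<bar> \<le> 1" "0 \<le> m" and m: "m\<^sup>2 = \<rho>\<^sup>2 + 2 * \<rho> * s * c + s\<^sup>2"
  shows "a * (1 - c) / 2 \<le> a + s - m"
proof -
  have "\<rho> * (1 - c) * ((3 + c) / 4) \<le> \<rho> * (1 - c)"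
    using mult_left_mono[of "(3 + c) / 4" 1 "\<rho> * (1 - c)"] assms by simp
  also have "\<dots> \<le> s * (1 - c)"
    using assms by (intro mult_right_mono) auto
  finally have "0 \<le> \<rho> * ((1 - c) * s - \<rho> * (1 - c) * (3 + c) / 4)"
    using assms by (intro mult_nonneg_nonneg) (auto simp: algebra_simps)
  also have "\<dots> = (s + \<rho> * (1 + c) / 2)\<^sup>2 - m\<^sup>2"
    unfolding m by (simp add: power2_eq_square field_simps)
  finally have "m\<^sup>2 \<le> (s + \<rho> * (1 + c) / 2)\<^sup>2"
    by simp
  then have "m \<le> s + \<rho> * (1 + c) / 2"
    by (rule power2_le_imp_le) (use assms in auto)
  moreover have "\<rho> * (1 + c) \<le> a * (1 + c)"
    using assms by (intro mult_right_mono) auto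
  ultimately show ?thesis
    by (simp add: field_simps)
qed

lemma law_of_cosines_far_ge:
  fixes \<rho> s c m :: real
  assumes "0 \<le> s" "s < \<rho>" "\<bar>c\<bar> \<le> 1" "0 \<le> m" and m: "m\<^sup>2 = \<rho>\<^sup>2 + 2 * \<rho> * s * c + s\<^sup>2"
  shows "(1 - c\<^sup>2) / 8 \<le> 1 - (\<rho> * c + s) / m"
proof -
  define q where "q = \<rho> * c + s"
  have q: "q \<le> m" "m \<le> \<rho> + s" "\<bar>\<rho> - s\<bar> \<le> m"
    using law_of_cosines_bounds[OF _ assms(1,3,4) m] assms by (simp_all add: q_def)
  then have "0 < m"
    using assms by linarith
  have "m\<^sup>2 \<le> (2 * \<rho>)\<^sup>2"
    using q assms by (intro power_mono) auto
  have "\<rho>\<^sup>2 * (1 - c\<^sup>2) = m\<^sup>2 - q\<^sup>2"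
    unfolding m q_def by (simp add: power2_eq_square algebra_simps)
  also have "\<dots> = (m - q) * (m + q)"
    by (simp add: power2_eq_square algebra_simps)
  also have "\<dots> \<le> (m - q) * (2 * m)"
    using q by (intro mult_left_mono) auto
  finally have "\<rho>\<^sup>2 * (1 - c\<^sup>2) * m \<le> (m - q) * (2 * m) * m"
    using \<open>0 < m\<close> by (intro mult_right_mono) auto
  also have "\<dots> = 2 * (m - q) * m\<^sup>2"
    by (simp add: power2_eq_square)
  also have "\<dots> \<le> 2 * (m - q) * (2 * \<rho>)\<^sup>2"
    using \<open>m\<^sup>2 \<le> (2 * \<rho>)\<^sup>2\<close> q by (intro mult_left_mono) auto
  finally have "\<rho>\<^sup>2 * ((1 - c\<^sup>2) * m) \<le> \<rho>\<^sup>2 * (8 * (m - q))"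
    by (simp add: power_mult_distrib algebra_simps)
  then have "(1 - c\<^sup>2) * m \<le> 8 * (m - q)"
    using assms by simp
  then show ?thesis
    using \<open>0 < m\<close> by (simp add: q_def field_simps)
qed

lemma powr_one_minus_square_le:
  fixes c \<alpha> :: real
  assumes "\<bar>c\<bar> < 1" "0 \<le> \<alpha>"
  shows "(1 - c\<^sup>2) powr - \<alpha> \<le> (1 - c) powr - \<alpha> + (1 + c) powr - \<alpha>"
proof -
  have "\<bar>c\<bar> * \<bar>c\<bar> \<le> \<bar>c\<bar> * 1"
    using assms by (intro mult_left_mono) auto
  then have "1 - \<bar>c\<bar> \<le> 1 - c\<^sup>2"
    by (simp add: power2_eq_square abs_mult_self_eq)
  then have "(1 - c\<^sup>2) powr - \<alpha> \<le> (1 - \<bar>c\<bar>) powr - \<alpha>"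
    using assms by (intro powr_mono2') auto
  then show ?thesis
    by (cases "0 \<le> c") (auto intro: add_increasing add_increasing2)
qed

lemma powr_weight_le_of_vs_ge:
  fixes U V a c \<alpha> \<gamma> :: real
  assumes "0 < \<gamma>" "0 \<le> \<alpha>" "\<alpha> * \<gamma> \<le> 1" "0 < a" "\<bar>c\<bar> < 1" "0 \<le> U" "a * (1 - c) / 2 \<le> V"
  shows "(U + V powr \<gamma>) powr - \<alpha> \<le> a powr (- \<alpha> * \<gamma>) * (2 * (1 - c) powr (- \<alpha> * \<gamma>))"
proof -
  define v where "v = a * (1 - c) / 2"
  have "0 < v"
    using assms by (simp add: v_def)
  then have "v powr \<gamma> \<le> U + V powr \<gamma>"
    using assms powr_mono2[of \<gamma> v V] by (simp add: v_def)
  then have "(U + V powr \<gamma>) powr - \<alpha> \<le> (v powr \<gamma>) powr - \<alpha>"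
    using \<open>0 < v\<close> assms by (intro powr_mono2') auto
  also have "\<dots> = a powr (- \<alpha> * \<gamma>) * (2 powr (\<alpha> * \<gamma>) * (1 - c) powr (- \<alpha> * \<gamma>))"
    using assms by (simp add: v_def powr_powr powr_mult powr_divide powr_minus divide_simps mult_ac)
  also have "\<dots> \<le> a powr (- \<alpha> * \<gamma>) * (2 * (1 - c) powr (- \<alpha> * \<gamma>))"
    using powr_mono[of "\<alpha> * \<gamma>" 1 2] assms by (intro mult_left_mono mult_right_mono) auto
  finally show ?thesis .
qed

lemma powr_weight_le_of_tau_ge:
  fixes T S V a c \<alpha> \<gamma> :: real
  assumes "0 < \<gamma>" "0 \<le> \<alpha>" "\<alpha> \<le> 1" "0 < a" and c: "\<bar>c\<bar> < 1"
    and "(1 - c\<^sup>2) / 8 \<le> T" "a \<le> S" "0 \<le> V"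
  shows "(T * S powr \<gamma> + V powr \<gamma>) powr - \<alpha>
    \<le> a powr (- \<alpha> * \<gamma>) * (8 * (1 - c) powr - \<alpha> + 8 * (1 + c) powr - \<alpha>)"
proof -
  define l where "l = (1 - c\<^sup>2) / 8 * a powr \<gamma>"
  have "0 < 1 - c\<^sup>2"
    using c by (simp add: abs_square_less_1)
  then have "0 < l"
    using assms by (simp add: l_def)
  have "a powr \<gamma> \<le> S powr \<gamma>"
    using assms by (intro powr_mono2) auto
  then have "l \<le> T * S powr \<gamma> + V powr \<gamma>"
    unfolding l_def using \<open>0 < 1 - c\<^sup>2\<close> assms by (intro add_increasing2 mult_mono) auto
  then have "(T * S powr \<gamma> + V powr \<gamma>) powr - \<alpha> \<le> l powr - \<alpha>"
    using \<open>0 < l\<close> assms by (intro powr_mono2') auto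
  also have "\<dots> = a powr (- \<alpha> * \<gamma>) * (8 powr \<alpha> * (1 - c\<^sup>2) powr - \<alpha>)"
    using assms by (simp add: l_def powr_powr powr_mult powr_divide powr_minus divide_simps mult_ac)
  also have "\<dots> \<le> a powr (- \<alpha> * \<gamma>) * (8 * ((1 - c) powr - \<alpha> + (1 + c) powr - \<alpha>))"
    using powr_one_minus_square_le[OF c \<open>0 \<le> \<alpha>\<close>] powr_mono[of \<alpha> 1 8] assms
    by (intro mult_left_mono mult_mono) auto
  also have "\<dots> = a powr (- \<alpha> * \<gamma>) * (8 * (1 - c) powr - \<alpha> + 8 * (1 + c) powr - \<alpha>)"
    by (simp add: distrib_left)
  finally show ?thesis .
qed

lemma powr_null_coords_le:
  fixes a \<rho> s c m \<alpha> \<gamma> :: real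
  assumes "0 < \<gamma>" "\<gamma> \<le> 1" "0 \<le> \<alpha>" "\<alpha> \<le> 1" "0 < a" "0 \<le> \<rho>" "\<rho> \<le> a" "0 \<le> s"
    and c: "\<bar>c\<bar> < 1" and "0 \<le> m" and m: "m\<^sup>2 = \<rho>\<^sup>2 + 2 * \<rho> * s * c + s\<^sup>2"
  shows "((1 - (\<rho> * c + s) / m) * (a + s + m) powr \<gamma> + (a + s - m) powr \<gamma>) powr - \<alpha>
    \<le> a powr (- \<alpha> * \<gamma>) * (2 * (1 - c) powr (- \<alpha> * \<gamma>) + 8 * (1 - c) powr - \<alpha> + 8 * (1 + c) powr - \<alpha>)"
    (is "?B powr - \<alpha> \<le> _")
proof -
  have bounds: "\<rho> * c + s \<le> m" "m \<le> \<rho> + s"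
    using law_of_cosines_bounds[of \<rho> s c m] assms by simp_all
  then have tau: "0 \<le> 1 - (\<rho> * c + s) / m"
    using \<open>0 \<le> m\<close> by (auto simp: divide_le_eq_1)
  show ?thesis
  proof (cases "\<rho> \<le> s")
    case True
    have "?B powr - \<alpha> \<le> a powr (- \<alpha> * \<gamma>) * (2 * (1 - c) powr (- \<alpha> * \<gamma>))"
      using law_of_cosines_near_ge[of \<rho> a s c m] assms True tau mult_le_one[of \<alpha> \<gamma>]
      by (intro powr_weight_le_of_vs_ge) auto
    then show ?thesis
      by (rule order_trans) (intro mult_left_mono; simp add: add.assoc add_nonneg_nonneg)
  next
    case False
    have "?B powr - \<alpha> \<le> a powr (- \<alpha> * \<gamma>) * (8 * (1 - c) powr - \<alpha> + 8 * (1 + c) powr - \<alpha>)"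
      using law_of_cosines_far_ge[of s \<rho> c m] assms False bounds
      by (intro powr_weight_le_of_tau_ge) auto
    then show ?thesis
      by (rule order_trans) (intro mult_left_mono; simp add: add.assoc)
  qed
qed

definition null_weight :: "real \<Rightarrow> real \<Rightarrow> real \<Rightarrow> real \<Rightarrow> real^3 \<Rightarrow> real \<Rightarrow> real^3 \<Rightarrow> real" where
  "null_weight R \<gamma> \<alpha> t0 x0 rt w =
    (let t = t0 - rt;
         x = x0 + rt *\<^sub>R w;
         r = norm x;
         \<omega> = (1 / r) *\<^sub>R x;
         \<tau> = \<omega> \<bullet> w;
         us = R - t + r;
         vs = R - t - r
     in ((1 - \<tau>) * us powr \<gamma> + vs powr \<gamma>) powr (- \<alpha>))"

lemma power2_norm_scaleR_add_unit:
  fixes e w :: "'a::real_inner"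
  assumes "norm e = 1" "norm w = 1"
  shows "(norm (\<rho> *\<^sub>R e + s *\<^sub>R w))\<^sup>2 = \<rho>\<^sup>2 + 2 * \<rho> * s * (e \<bullet> w) + s\<^sup>2"
  using assms unfolding power2_norm_eq_inner
  by (simp add: inner_add_left inner_add_right inner_commute[of w e] norm_eq_1 power2_eq_square algebra_simps)

lemma null_weight_eq:
  fixes x0 e w :: "real^3"
  assumes "norm w = 1" "x0 = \<rho> *\<^sub>R e" "m = norm (x0 + rt *\<^sub>R w)"
  shows "null_weight R \<gamma> \<alpha> t0 x0 rt w
    = ((1 - (\<rho> * (e \<bullet> w) + rt) / m) * (R - t0 + rt + m) powr \<gamma> + (R - t0 + rt - m) powr \<gamma>) powr - \<alpha>"
proof -
  have tau: "((1 / m) *\<^sub>R (x0 + rt *\<^sub>R w)) \<bullet> w = (\<rho> * (e \<bullet> w) + rt) / m"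
    using assms(1,2) by (simp add: inner_add_left norm_eq_1)
  have us: "R - (t0 - rt) + m = R - t0 + rt + m" and vs: "R - (t0 - rt) - m = R - t0 + rt - m"
    by simp_all
  show ?thesis
    unfolding null_weight_def Let_def assms(3)[symmetric] tau us vs ..
qed

lemma null_weight_le:
  fixes x0 e w :: "real^3"
  assumes "0 < \<gamma>" "\<gamma> \<le> 1" "0 \<le> \<alpha>" "\<alpha> \<le> 1" "t0 + norm x0 \<le> R" "t0 < R" "0 \<le> rt"
    and e: "norm e = 1" "x0 = norm x0 *\<^sub>R e" and w: "norm w = 1"
  shows "ennreal (null_weight R \<gamma> \<alpha> t0 x0 rt w) \<le> ennreal ((R - t0) powr (- \<alpha> * \<gamma>))
    * (2 * pole_sing (\<alpha> * \<gamma>) e w + 8 * pole_sing \<alpha> e w + 8 * pole_sing \<alpha> (- e) w)"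
proof -
  define a \<rho> c m where "a = R - t0" and "\<rho> = norm x0" and "c = e \<bullet> w" and "m = norm (x0 + rt *\<^sub>R w)"
  have "0 < a" "0 \<le> \<rho>" "\<rho> \<le> a"
    using assms by (auto simp: a_def \<rho>_def)
  have "\<bar>c\<bar> \<le> 1"
    using Cauchy_Schwarz_ineq2[of e w] e w by (simp add: c_def)
  show ?thesis
  proof (cases "\<bar>c\<bar> = 1")
    case True
    then have "pole_sing (\<alpha> * \<gamma>) e w = \<infinity> \<or> pole_sing \<alpha> (- e) w = \<infinity>"
      by (auto simp: pole_sing_def c_def abs_if split: if_splits)
    moreover have "ennreal ((R - t0) powr (- \<alpha> * \<gamma>)) \<noteq> 0"
      using \<open>0 < a\<close> by (simp add: a_def)
    ultimately show ?thesis
      by (auto simp: ennreal_mult_eq_top_iff)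
  next
    case False
    then have c: "\<bar>c\<bar> < 1"
      using \<open>\<bar>c\<bar> \<le> 1\<close> by simp
    have x0: "x0 = \<rho> *\<^sub>R e"
      using e by (simp add: \<rho>_def)
    have "m\<^sup>2 = \<rho>\<^sup>2 + 2 * \<rho> * rt * c + rt\<^sup>2"
      unfolding m_def x0 c_def using e(1) w by (rule power2_norm_scaleR_add_unit)
    then have bound: "null_weight R \<gamma> \<alpha> t0 x0 rt w
        \<le> a powr (- \<alpha> * \<gamma>) * (2 * (1 - c) powr (- \<alpha> * \<gamma>) + 8 * (1 - c) powr - \<alpha> + 8 * (1 + c) powr - \<alpha>)"
      unfolding null_weight_eq[OF w x0 m_def] a_def[symmetric] c_def[symmetric]
      using assms \<open>0 < a\<close> \<open>0 \<le> \<rho>\<close> \<open>\<rho> \<le> a\<close> c by (intro powr_null_coords_le) (auto simp: m_def)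
    have "pole_sing p e w = ennreal ((1 - c) powr - p)" "pole_sing p (- e) w = ennreal ((1 + c) powr - p)"
      for p
      using c by (auto simp: pole_sing_def c_def)
    then show ?thesis
      using ennreal_leI[OF bound]
      by (simp add: a_def ennreal_mult' ennreal_plus add_nonneg_nonneg mult_nonneg_nonneg)
  qed
qed

lemma nn_integral_null_weight_le:
  fixes x0 :: "real^3"
  assumes "0 < \<gamma>" "\<gamma> \<le> 1" "0 \<le> \<alpha>" "\<alpha> < 1" "t0 + norm x0 \<le> R" "t0 < R" "0 \<le> rt"
  shows "(\<integral>\<^sup>+ w. ennreal (null_weight R \<gamma> \<alpha> t0 x0 rt w) \<partial>S2_measure)
    \<le> ennreal ((2 * pole_bound (\<alpha> * \<gamma>) + 16 * pole_bound \<alpha>) * (R - t0) powr (- \<alpha> * \<gamma>))"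
proof -
  obtain e :: "real^3" where e: "norm e = 1" "x0 = norm x0 *\<^sub>R e"
  proof (cases "x0 = 0")
    case True
    then show ?thesis
      using that[of "sph 0 0"] by simp
  next
    case False
    then show ?thesis
      using that[of "sgn x0"] by (simp add: norm_sgn sgn_div_norm)
  qed
  have p: "0 \<le> \<alpha> * \<gamma>" "\<alpha> * \<gamma> < 1"
    using assms mult_left_le[of \<gamma> \<alpha>] by auto
  have pole_bound_nonneg: "0 \<le> pole_bound p" if "p < 1" for p
    using that by (simp add: pole_bound_def)
  define A where "A = (R - t0) powr (- \<alpha> * \<gamma>)"
  have "(\<integral>\<^sup>+ w. ennreal (null_weight R \<gamma> \<alpha> t0 x0 rt w) \<partial>S2_measure)
      \<le> (\<integral>\<^sup>+ w. ennreal A * (2 * pole_sing (\<alpha> * \<gamma>) e w + 8 * pole_sing \<alpha> e w + 8 * pole_sing \<alpha> (- e) w) \<partial>S2_measure)"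
    using AE_S2_measure_norm
    by (rule nn_integral_mono_AE[OF AE_mp], intro AE_I2 impI)
      (unfold A_def, rule null_weight_le, use assms e in auto)
  also have "\<dots> = ennreal A * (2 * (\<integral>\<^sup>+ w. pole_sing (\<alpha> * \<gamma>) e w \<partial>S2_measure)
      + 8 * (\<integral>\<^sup>+ w. pole_sing \<alpha> e w \<partial>S2_measure) + 8 * (\<integral>\<^sup>+ w. pole_sing \<alpha> (- e) w \<partial>S2_measure))"
    by (simp add: nn_integral_cmult nn_integral_add)
  also have "\<dots> \<le> ennreal A * (2 * ennreal (pole_bound (\<alpha> * \<gamma>)) + 8 * ennreal (pole_bound \<alpha>) + 8 * ennreal (pole_bound \<alpha>))"
    using assms p e by (intro mult_left_mono add_mono nn_integral_pole_sing_le) auto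
  also have "\<dots> = ennreal A * (2 * ennreal (pole_bound (\<alpha> * \<gamma>)) + 16 * ennreal (pole_bound \<alpha>))"
    by (simp add: add.assoc flip: distrib_right)
  also have "\<dots> = ennreal ((2 * pole_bound (\<alpha> * \<gamma>) + 16 * pole_bound \<alpha>) * A)"
    using pole_bound_nonneg[of \<alpha>] pole_bound_nonneg[of "\<alpha> * \<gamma>"] assms p
    by (simp add: ennreal_mult'' ennreal_plus mult.commute)
  finally show ?thesis
    by (simp add: A_def)
qed

theorem lemma5p2:
  fixes R \<gamma> \<alpha> :: real
  assumes "R > 1" and "0 < \<gamma>" and "\<gamma> < 1" and "0 \<le> \<alpha>" and "\<alpha> < 1"
  shows "\<exists>C::real. \<forall>(t0::real) (x0::real^3) (rt::real).
           0 \<le> t0 \<longrightarrow> t0 + norm x0 \<le> R \<longrightarrow> t0 < R \<longrightarrow>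
           0 \<le> rt \<longrightarrow> rt \<le> t0 \<longrightarrow>
           (\<integral>\<^sup>+ w. ennreal (
              let t = t0 - rt;
                  x = x0 + rt *\<^sub>R w;
                  r = norm x;
                  \<omega> = (1 / r) *\<^sub>R x;
                  \<tau> = \<omega> \<bullet> w;
                  us = R - t + r;
                  vs = R - t - r
              in ((1 - \<tau>) * us powr \<gamma> + vs powr \<gamma>) powr (- \<alpha>)) \<partial>S2_measure)
           \<le> ennreal (C * (R - t0) powr (- \<alpha> * \<gamma>))"
  unfolding null_weight_def[symmetric]
  using assms by (intro exI[of _ "2 * pole_bound (\<alpha> * \<gamma>) + 16 * pole_bound \<alpha>"] allI impI
      nn_integral_null_weight_le) auto

end
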